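(* Let $L$ be a pentagonal linkage and let $q_1,q_2,q_4>0$ be fixed. Place charges $(q_1,q_2,t,q_4,s)$ at the vertices $A_1,\dots,A_5$, giving the effective Coulomb potential $$E=\frac{q_1q_4}{|A_1A_4|}+\frac{q_2q_4}{|A_2A_4|}+\frac{q_1t}{|A_1A_3|}+\frac{q_2s}{|A_2A_5|}+\frac{st}{|A_3A_5|}.$$ Then for each convex configuration $P\in M^C(L)$ there exists exactly one pair $(s,t)\in(\mathbb{R}_{>0})^2$ such that $P$ is a critical point of $E$ on $M(L)$.
   Context: A pentagonal linkage $L$ is given by side lengths $a_1,\dots,a_5>0$; $M(L)$ is the set of planar 5-gons $(A_1,\dots,A_5)$ with $|A_iA_{i+1}|=a_i$ (indices mod 5) modulo all isometries of $\mathbb{R}^2$. $M^C(L)$ is the set of strictly convex configurations (convex pentagon $A_1\dots A_5$ in this cyclic order, no angle equal to $\pi$); near such points $M(L)$ is a smooth surface, and a critical point means the differential of $E$ restricted to $M(L)$ vanishes there. *)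

theory Defs
  imports "HOL-Analysis.Analysis"
begin

text \<open>A planar pentagon is a map A :: nat => complex; only the vertices
  A 0, ..., A 4 (standing for A_1, ..., A_5) matter.  Indices are mod 5.
  Side lengths a 0, ..., a 4 stand for a_1, ..., a_5.\<close>

definition in_config :: "(nat \<Rightarrow> real) \<Rightarrow> (nat \<Rightarrow> complex) \<Rightarrow> bool" where
  "in_config a A \<longleftrightarrow> (\<forall>i<5. cmod (A (Suc i mod 5) - A i) = a i)"

definition cross :: "complex \<Rightarrow> complex \<Rightarrow> real" where
  "cross u v = Im (cnj u * v)"

definition strictly_convex :: "(nat \<Rightarrow> complex) \<Rightarrow> bool" where
  "strictly_convex A \<longleftrightarrow>
     (\<forall>i<5. \<forall>j<5. j \<noteq> i \<and> j \<noteq> Suc i mod 5 \<longrightarrow>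
         cross (A (Suc i mod 5) - A i) (A j - A i) > 0) \<or>
     (\<forall>i<5. \<forall>j<5. j \<noteq> i \<and> j \<noteq> Suc i mod 5 \<longrightarrow>
         cross (A (Suc i mod 5) - A i) (A j - A i) < 0)"

definition coulomb :: "real \<Rightarrow> real \<Rightarrow> real \<Rightarrow> real \<Rightarrow> real \<Rightarrow> (nat \<Rightarrow> complex) \<Rightarrow> real" where
  "coulomb q1 q2 t q4 s A =
     q1 * q4 / cmod (A 0 - A 3) + q2 * q4 / cmod (A 1 - A 3) + q1 * t / cmod (A 0 - A 2)
     + q2 * s / cmod (A 1 - A 4) + s * t / cmod (A 2 - A 4)"

text \<open>P is a critical point of f on the configuration space M(L): for every curve
  in the configuration space through P that is differentiable at 0, the derivative
  of f along the curve at 0 vanishes (i.e. df vanishes on the tangent space).\<close>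
definition critical_on_config ::
  "(nat \<Rightarrow> real) \<Rightarrow> ((nat \<Rightarrow> complex) \<Rightarrow> real) \<Rightarrow> (nat \<Rightarrow> complex) \<Rightarrow> bool" where
  "critical_on_config a f P \<longleftrightarrow>
     (\<forall>(\<gamma> :: real \<Rightarrow> nat \<Rightarrow> complex) (v :: nat \<Rightarrow> complex).
        (\<forall>i<5. \<gamma> 0 i = P i) \<and>
        (\<forall>i<5. ((\<lambda>\<tau>. \<gamma> \<tau> i) has_vector_derivative v i) (at 0)) \<and>
        (\<forall>\<^sub>F \<tau> in nhds 0. in_config a (\<gamma> \<tau>))
        \<longrightarrow> ((\<lambda>\<tau>. f (\<gamma> \<tau>)) has_real_derivative 0) (at 0))"

end

theory Submission
  imports Defs
begin

text \<open>Along a motion of the linkage with velocities \<open>v\<close>, the derivative of \<open>E\<close> is minus the work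
  \<open>\<Sum> u\<^sub>i\<^sub>j \<langle>A\<^sub>i - A\<^sub>j, v\<^sub>i - v\<^sub>j\<rangle>\<close> of the forces along the five diagonals, with
  \<open>u\<^sub>i\<^sub>j = q\<^sub>i q\<^sub>j / |A\<^sub>iA\<^sub>j|\<^sup>3\<close>. Modulo rigid motions a pentagon has a two-dimensional space of
  infinitesimal motions; at a convex configuration it is spanned by rotating \<open>A\<^sub>3\<close> about
  \<open>A\<^sub>2\<close> and rotating \<open>A\<^sub>5\<close> about \<open>A\<^sub>1\<close>, with \<open>A\<^sub>4\<close> following through a four-bar linkage.
  Criticality therefore amounts to two equations, which by convexity take the form
  \<open>t (\<alpha>\<^sub>1 + s \<beta>\<^sub>1) = \<gamma>\<^sub>1\<close> and \<open>s (\<alpha>\<^sub>2 + t \<beta>\<^sub>2) = \<gamma>\<^sub>2\<close> with positive coefficients.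
  Eliminating \<open>s\<close> leaves a quadratic in \<open>t\<close> with positive leading and negative constant
  coefficient, which has exactly one positive root.\<close>

section \<open>Derivatives of distances along curves\<close>

lemma norm_has_real_derivative:
  fixes f :: "real \<Rightarrow> 'a :: real_inner"
  assumes "(f has_vector_derivative v) (at t)" "f t \<noteq> 0"
  shows "((\<lambda>\<tau>. norm (f \<tau>)) has_real_derivative inner (f t) v / norm (f t)) (at t)"
proof -
  have "((\<lambda>\<tau>. norm (f \<tau>)) has_derivative (\<lambda>x. inner (x *\<^sub>R v) (sgn (f t)))) (at t)"
    using has_derivative_compose[OF assms(1)[unfolded has_vector_derivative_def]
        has_derivative_norm[OF assms(2)]] by simp
  then show ?thesis unfolding has_field_derivative_def
    by (rule has_derivative_eq_rhs) (auto simp: fun_eq_iff sgn_div_norm inner_commute field_simps)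
qed

lemma inverse_norm_has_real_derivative:
  fixes f :: "real \<Rightarrow> 'a :: real_inner"
  assumes "(f has_vector_derivative v) (at t)" "f t \<noteq> 0"
  shows "((\<lambda>\<tau>. w / norm (f \<tau>)) has_real_derivative - w * inner (f t) v / norm (f t) ^ 3) (at t)"
proof -
  have "((\<lambda>\<tau>. w / norm (f \<tau>)) has_real_derivative
      (0 * norm (f t) - w * (inner (f t) v / norm (f t))) / (norm (f t) * norm (f t))) (at t)"
    using assms by (intro DERIV_divide DERIV_const norm_has_real_derivative) auto
  then show ?thesis using assms(2) by (simp add: power3_eq_cube field_simps)
qed

lemma has_real_derivative_eventually_const:
  assumes "(g has_real_derivative D) (at x)" "\<forall>\<^sub>F \<tau> in nhds x. g \<tau> = c"
  shows "D = 0"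
proof -
  have "((\<lambda>_. c) has_real_derivative D) (at x)"
    using DERIV_cong_ev[of x x g "\<lambda>_. c" D D] assms by simp
  then show ?thesis using DERIV_unique DERIV_const by blast
qed


section \<open>A four-bar linkage\<close>

definition apex_radicand :: "real \<Rightarrow> real \<Rightarrow> complex \<Rightarrow> real" where
  "apex_radicand r1 r2 z = r1\<^sup>2 / cmod z ^ 2 - ((cmod z ^ 2 + r1\<^sup>2 - r2\<^sup>2) / (2 * cmod z ^ 2))\<^sup>2"

text \<open>For \<open>\<bar>e\<bar> = 1\<close>, the apex of the triangle with base \<open>0, z\<close> and sides \<open>r1\<close> at \<open>0\<close> and
  \<open>r2\<close> at \<open>z\<close>; the sign \<open>e\<close> selects the side of the base line.\<close>
definition triangle_apex :: "real \<Rightarrow> real \<Rightarrow> real \<Rightarrow> complex \<Rightarrow> complex" where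
  "triangle_apex e r1 r2 z =
     z * (of_real ((cmod z ^ 2 + r1\<^sup>2 - r2\<^sup>2) / (2 * cmod z ^ 2))
          + \<i> * of_real (e * sqrt (apex_radicand r1 r2 z)))"

lemma norm_triangle_apex:
  fixes z :: complex and r1 r2 e :: real
  assumes "z \<noteq> 0" "r1 \<ge> 0" "r2 \<ge> 0" "\<bar>e\<bar> = 1" and nonneg: "apex_radicand r1 r2 z \<ge> 0"
  shows "cmod (triangle_apex e r1 r2 z) = r1" and "cmod (triangle_apex e r1 r2 z - z) = r2"
proof -
  define \<rho> where "\<rho> = (cmod z ^ 2 + r1\<^sup>2 - r2\<^sup>2) / (2 * cmod z ^ 2)"
  define w where "w = of_real \<rho> + \<i> * of_real (e * sqrt (r1\<^sup>2 / cmod z ^ 2 - \<rho>\<^sup>2))"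
  have apex: "triangle_apex e r1 r2 z = z * w"
    by (simp add: triangle_apex_def apex_radicand_def \<rho>_def w_def)
  have n: "cmod z ^ 2 > 0" using assms(1) by simp
  have "e\<^sup>2 = 1" using assms(4) by (metis abs_power2 one_power2 power2_abs)
  then have ww: "cmod w ^ 2 = r1\<^sup>2 / cmod z ^ 2"
    using nonneg by (simp add: w_def \<rho>_def apex_radicand_def cmod_power2 power_mult_distrib)
  have "cmod (z * w) ^ 2 = r1\<^sup>2"
    using n by (simp add: norm_mult power_mult_distrib ww)
  then show "cmod (triangle_apex e r1 r2 z) = r1"
    using assms(2) by (simp add: apex power2_eq_imp_eq)
  have "cmod (w - 1) ^ 2 = cmod w ^ 2 - 2 * \<rho> + 1"
    unfolding cmod_power2 by (simp add: w_def power2_eq_square algebra_simps)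
  then have "cmod (z * (w - 1)) ^ 2 = cmod z ^ 2 * (r1\<^sup>2 / cmod z ^ 2 - 2 * \<rho> + 1)"
    by (simp add: norm_mult power_mult_distrib ww)
  also have "\<dots> = r2\<^sup>2"
    using n by (simp add: \<rho>_def field_simps)
  finally show "cmod (triangle_apex e r1 r2 z - z) = r2"
    using assms(3) by (simp add: apex right_diff_distrib power2_eq_imp_eq)
qed

lemma triangle_apex_law_of_cosines:
  fixes x z :: complex
  assumes "z \<noteq> 0" "cross z x \<noteq> 0"
  shows "triangle_apex (sgn (cross z x)) (cmod x) (cmod (x - z)) z = x"
    and "apex_radicand (cmod x) (cmod (x - z)) z > 0"
proof -
  define \<rho> where "\<rho> = (cmod z ^ 2 + cmod x ^ 2 - cmod (x - z) ^ 2) / (2 * cmod z ^ 2)"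
  have "cmod z ^ 2 + cmod x ^ 2 - cmod (x - z) ^ 2 = 2 * (Re x * Re z + Im x * Im z)"
    unfolding cmod_power2 by (simp add: power2_eq_square algebra_simps)
  then have "\<rho> = Re (x / z)"
    unfolding \<rho>_def Re_divide by (simp only: mult_divide_mult_cancel_left_if cmod_power2) simp
  moreover have "cross z x / cmod z ^ 2 = Im (x / z)"
    by (simp add: Im_divide cmod_power2 cross_def algebra_simps)
  ultimately have quot: "x / z = of_real \<rho> + \<i> * of_real (cross z x / cmod z ^ 2)"
    by (simp add: complex_eq_iff)
  have "cmod x ^ 2 / cmod z ^ 2 = cmod (x / z) ^ 2"
    by (simp add: norm_divide power_divide)
  also have "\<dots> = \<rho>\<^sup>2 + (cross z x / cmod z ^ 2)\<^sup>2"
    unfolding quot cmod_power2 by simp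
  finally have radicand: "apex_radicand (cmod x) (cmod (x - z)) z = (cross z x / cmod z ^ 2)\<^sup>2"
    by (simp add: apex_radicand_def \<rho>_def)
  then show "apex_radicand (cmod x) (cmod (x - z)) z > 0"
    using assms by simp
  have r: "cmod x ^ 2 / cmod z ^ 2 - \<rho>\<^sup>2 = (cross z x / cmod z ^ 2)\<^sup>2"
    using radicand by (simp add: apex_radicand_def \<rho>_def)
  have s: "sgn (cross z x) * sqrt ((cross z x / cmod z ^ 2)\<^sup>2) = cross z x / cmod z ^ 2"
    by (simp add: real_sqrt_abs abs_divide sgn_mult_abs)
  have "triangle_apex (sgn (cross z x)) (cmod x) (cmod (x - z)) z
      = z * (of_real \<rho> + \<i> * of_real (sgn (cross z x) * sqrt (cmod x ^ 2 / cmod z ^ 2 - \<rho>\<^sup>2)))"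
    by (simp only: triangle_apex_def apex_radicand_def \<rho>_def)
  also have "\<dots> = z * (of_real \<rho> + \<i> * of_real (cross z x / cmod z ^ 2))"
    by (simp only: r s)
  also have "\<dots> = x"
    using quot assms(1) by (simp add: field_simps)
  finally show "triangle_apex (sgn (cross z x)) (cmod x) (cmod (x - z)) z = x" .
qed

lemma rigid_triangle_along_curve:
  fixes c :: "real \<Rightarrow> complex" and Q Y0 :: complex
  assumes c: "c differentiable (at 0)" and ncol: "cross (c 0 - Q) (Y0 - Q) \<noteq> 0"
  obtains y where "y 0 = Y0" "y differentiable (at 0)"
    "\<forall>\<^sub>F \<tau> in nhds 0. cmod (y \<tau> - c \<tau>) = cmod (Y0 - c 0) \<and> cmod (y \<tau> - Q) = cmod (Y0 - Q)"
proof -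
  define z where "z \<tau> = c \<tau> - Q" for \<tau>
  define r1 where "r1 = cmod (Y0 - Q)"
  define r2 where "r2 = cmod (Y0 - c 0)"
  define e where "e = sgn (cross (z 0) (Y0 - Q))"
  define y where "y \<tau> = Q + triangle_apex e r1 r2 (z \<tau>)" for \<tau>
  define A where "A \<tau> = apex_radicand r1 r2 (z \<tau>)" for \<tau>
  have cr: "cross (z 0) (Y0 - Q) \<noteq> 0" using ncol by (simp add: z_def)
  then have z0: "z 0 \<noteq> 0" by (auto simp: cross_def)
  have "Y0 - Q - z 0 = Y0 - c 0" by (simp add: z_def)
  note law = triangle_apex_law_of_cosines[OF z0 cr, unfolded this]
  have y0: "y 0 = Y0" using law(1) by (simp add: y_def e_def r1_def r2_def)
  have A0: "A 0 > 0" using law(2) by (simp add: A_def r1_def r2_def)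
  have dz: "z differentiable (at 0)"
    unfolding z_def[abs_def] using c by (intro derivative_intros)
  then have dN: "(\<lambda>\<tau>. cmod (z \<tau>) ^ 2) differentiable (at 0)"
    by (rule differentiable_compose[OF differentiable_sqnorm_at])
  then have dA: "A differentiable (at 0)"
    unfolding A_def[abs_def] apex_radicand_def using z0 by (auto intro!: derivative_intros)
  have "sqrt differentiable (at (A 0))"
    using DERIV_real_sqrt[OF A0] by (auto simp: differentiable_def has_field_derivative_def)
  from differentiable_compose[OF this dA]
  have "(\<lambda>\<tau>. e * sqrt (A \<tau>)) differentiable (at 0)" by (intro derivative_intros)
  from differentiable_compose[OF of_real_differentiable this]
  have "(\<lambda>\<tau>. of_real (e * sqrt (A \<tau>)) :: complex) differentiable (at 0)"
    by (simp add: o_def del: of_real_mult)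
  moreover have "(\<lambda>\<tau>. (cmod (z \<tau>) ^ 2 + r1\<^sup>2 - r2\<^sup>2) / (2 * cmod (z \<tau>) ^ 2)) differentiable (at 0)"
    using dN z0 by (auto intro!: derivative_intros)
  from differentiable_compose[OF of_real_differentiable this]
  have "(\<lambda>\<tau>. of_real ((cmod (z \<tau>) ^ 2 + r1\<^sup>2 - r2\<^sup>2) / (2 * cmod (z \<tau>) ^ 2)) :: complex)
      differentiable (at 0)"
    by (simp add: o_def del: of_real_divide of_real_add of_real_diff of_real_mult of_real_power)
  ultimately have dy: "y differentiable (at 0)"
    unfolding y_def[abs_def] triangle_apex_def A_def apex_radicand_def by (intro derivative_intros dz)
  have "(A \<longlongrightarrow> A 0) (nhds 0)"
    using differentiable_imp_continuous_within[OF dA] by (simp add: tendsto_nhds_iff continuous_at)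
  then have "\<forall>\<^sub>F \<tau> in nhds 0. A \<tau> > 0" using A0 order_tendstoD(1) by blast
  then have "\<forall>\<^sub>F \<tau> in nhds 0. cmod (y \<tau> - Q - z \<tau>) = r2 \<and> cmod (y \<tau> - Q) = r1"
  proof eventually_elim
    case (elim \<tau>)
    then have "z \<tau> \<noteq> 0" by (auto simp: A_def apex_radicand_def)
    with elim norm_triangle_apex[of "z \<tau>" r1 r2 e] cr show ?case
      by (simp add: y_def A_def r1_def r2_def e_def abs_sgn)
  qed
  then show ?thesis using that y0 dy by (simp add: z_def r1_def r2_def algebra_simps)
qed

section \<open>Infinitesimal motions of the pentagon\<close>

lemma all_less_5_iff: "(\<forall>i<(5::nat). Q i) \<longleftrightarrow> Q 0 \<and> Q 1 \<and> Q 2 \<and> Q 3 \<and> Q 4"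
proof
  assume "Q 0 \<and> Q 1 \<and> Q 2 \<and> Q 3 \<and> Q 4"
  moreover have "i < 5 \<Longrightarrow> i = 0 \<or> i = 1 \<or> i = 2 \<or> i = 3 \<or> i = 4" for i :: nat by arith
  ultimately show "\<forall>i<5. Q i" by auto
qed auto

definition infinitesimal_motion :: "(nat \<Rightarrow> complex) \<Rightarrow> (nat \<Rightarrow> complex) \<Rightarrow> bool" where
  "infinitesimal_motion P v \<longleftrightarrow> (\<forall>i<5. inner (P (Suc i mod 5) - P i) (v (Suc i mod 5) - v i) = 0)"

lemma infinitesimal_motion_iff:
  "infinitesimal_motion P v \<longleftrightarrow>
     inner (P 1 - P 0) (v 1 - v 0) = 0 \<and> inner (P 2 - P 1) (v 2 - v 1) = 0 \<and>
     inner (P 3 - P 2) (v 3 - v 2) = 0 \<and> inner (P 4 - P 3) (v 4 - v 3) = 0 \<and>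
     inner (P 0 - P 4) (v 0 - v 4) = 0"
  by (simp add: infinitesimal_motion_def all_less_5_iff numeral_2_eq_2[symmetric])

lemma in_config_iff:
  "in_config a P \<longleftrightarrow>
     cmod (P 1 - P 0) = a 0 \<and> cmod (P 2 - P 1) = a 1 \<and> cmod (P 3 - P 2) = a 2 \<and>
     cmod (P 4 - P 3) = a 3 \<and> cmod (P 0 - P 4) = a 4"
  by (simp add: in_config_def all_less_5_iff numeral_2_eq_2[symmetric])

lemma tangent_is_infinitesimal_motion:
  assumes \<gamma>0: "\<forall>i<5. \<gamma> 0 i = P i" and d: "\<forall>i<5. ((\<lambda>\<tau>. \<gamma> \<tau> i) has_vector_derivative v i) (at 0)"
    and ev: "\<forall>\<^sub>F \<tau> in nhds 0. in_config a (\<gamma> \<tau>)" and pos: "\<forall>i<5. a i > 0"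
  shows "infinitesimal_motion P v"
  unfolding infinitesimal_motion_def
proof (intro allI impI)
  fix i :: nat assume i: "i < 5"
  define j where "j = Suc i mod 5"
  have j: "j < 5" unfolding j_def by simp
  have "\<forall>\<^sub>F \<tau> in nhds 0. cmod (\<gamma> \<tau> j - \<gamma> \<tau> i) = a i"
    using ev by eventually_elim (use i in \<open>simp add: in_config_def j_def\<close>)
  then have "cmod (P j - P i) = a i"
    using \<gamma>0 i j by (auto dest: eventually_nhds_x_imp_x)
  then have nz: "P j - P i \<noteq> 0" using pos i by auto
  have "((\<lambda>\<tau>. \<gamma> \<tau> j - \<gamma> \<tau> i) has_vector_derivative v j - v i) (at 0)"
    using d i j by (intro has_vector_derivative_diff) auto
  from norm_has_real_derivative[OF this]
  have "((\<lambda>\<tau>. cmod (\<gamma> \<tau> j - \<gamma> \<tau> i)) has_real_derivative inner (P j - P i) (v j - v i) / cmod (P j - P i)) (at 0)"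
    using \<gamma>0 i j nz by simp
  with \<open>\<forall>\<^sub>F \<tau> in nhds 0. cmod (\<gamma> \<tau> j - \<gamma> \<tau> i) = a i\<close>
  have "inner (P j - P i) (v j - v i) / cmod (P j - P i) = 0"
    using has_real_derivative_eventually_const by blast
  then show "inner (P (Suc i mod 5) - P i) (v (Suc i mod 5) - v i) = 0"
    using nz unfolding j_def by simp
qed

text \<open>\<open>P k\<close> turns on its circle about \<open>P p\<close>, and \<open>P 3\<close> follows so that the four-bar linkage
  \<open>P p, P k, P 3, P m\<close> keeps its shape; all other vertices stay fixed.\<close>
lemma rotation_curve:
  assumes cfg: "in_config a P"
    and kpm: "(k, p, m) = (2::nat, 1::nat, 4::nat) \<or> (k, p, m) = (4, 0, 2)"
    and ncol: "cross (P k - P m) (P 3 - P m) \<noteq> 0"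
  obtains \<gamma> v where "\<forall>i<5. \<gamma> 0 i = P i" "\<forall>i<5. ((\<lambda>\<tau>. \<gamma> \<tau> i) has_vector_derivative v i) (at 0)"
    "\<forall>\<^sub>F \<tau> in nhds 0. in_config a (\<gamma> \<tau>)"
    "v k = \<i> * (P k - P p)" "\<forall>i. i \<noteq> k \<and> i \<noteq> 3 \<longrightarrow> v i = 0"
proof -
  define c where "c \<tau> = P p + (P k - P p) * exp (\<i> * of_real \<tau>)" for \<tau> :: real
  have "((\<lambda>z. P p + (P k - P p) * exp (\<i> * z)) has_field_derivative \<i> * (P k - P p)) (at (of_real 0))"
    by (auto intro!: derivative_eq_intros)
  then have dc: "(c has_vector_derivative \<i> * (P k - P p)) (at 0)"
    unfolding c_def[abs_def] by (rule has_vector_derivative_real_field)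
  have c0: "c 0 = P k" by (simp add: c_def)
  obtain y where y0: "y 0 = P 3" and dy: "y differentiable (at 0)"
    and y_ev: "\<forall>\<^sub>F \<tau> in nhds 0. cmod (y \<tau> - c \<tau>) = cmod (P 3 - P k) \<and> cmod (y \<tau> - P m) = cmod (P 3 - P m)"
    using rigid_triangle_along_curve[of c "P m" "P 3"] differentiableI_vector[OF dc] c0 ncol by auto
  define \<gamma> where "\<gamma> \<tau> i = (if i = k then c \<tau> else if i = 3 then y \<tau> else P i)" for \<tau> i
  define v where "v i = (if i = k then \<i> * (P k - P p) else if i = 3 then vector_derivative y (at 0) else 0)" for i
  have k3: "k \<noteq> 3" using kpm by auto
  have "\<forall>i<5. \<gamma> 0 i = P i" using c0 y0 by (simp add: \<gamma>_def)
  moreover have "\<forall>i<5. ((\<lambda>\<tau>. \<gamma> \<tau> i) has_vector_derivative v i) (at 0)"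
    using dc vector_derivative_works[THEN iffD1, OF dy] k3
    by (auto simp: \<gamma>_def v_def has_vector_derivative_const)
  moreover have "\<forall>\<^sub>F \<tau> in nhds 0. in_config a (\<gamma> \<tau>)"
    using y_ev
  proof eventually_elim
    case (elim \<tau>)
    have "cmod (c \<tau> - P p) = cmod (P k - P p)" by (simp add: c_def norm_mult)
    with elim cfg kpm show ?case
      by (auto simp: in_config_iff \<gamma>_def norm_minus_commute)
  qed
  moreover have "v k = \<i> * (P k - P p)" "\<forall>i. i \<noteq> k \<and> i \<noteq> 3 \<longrightarrow> v i = 0"
    by (simp_all add: v_def)
  ultimately show ?thesis using that by blast
qed

section \<open>Work of the diagonal forces\<close>

definition diagonal_work ::
  "real \<Rightarrow> real \<Rightarrow> real \<Rightarrow> real \<Rightarrow> real \<Rightarrow> (nat \<Rightarrow> complex) \<Rightarrow> (nat \<Rightarrow> complex) \<Rightarrow> real" where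
  "diagonal_work u02 u03 u13 u14 u24 P v =
     u02 * inner (P 0 - P 2) (v 0 - v 2) + u03 * inner (P 0 - P 3) (v 0 - v 3) +
     u13 * inner (P 1 - P 3) (v 1 - v 3) + u14 * inner (P 1 - P 4) (v 1 - v 4) +
     u24 * inner (P 2 - P 4) (v 2 - v 4)"

lemma coulomb_has_real_derivative:
  assumes diagonals: "P 0 \<noteq> P 2" "P 0 \<noteq> P 3" "P 1 \<noteq> P 3" "P 1 \<noteq> P 4" "P 2 \<noteq> P 4"
    and \<gamma>0: "\<forall>i<5. \<gamma> 0 i = P i" and d: "\<forall>i<5. ((\<lambda>\<tau>. \<gamma> \<tau> i) has_vector_derivative v i) (at 0)"
  shows "((\<lambda>\<tau>. coulomb q1 q2 t q4 s (\<gamma> \<tau>)) has_real_derivative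
           - diagonal_work (q1 * t / cmod (P 0 - P 2) ^ 3) (q1 * q4 / cmod (P 0 - P 3) ^ 3)
               (q2 * q4 / cmod (P 1 - P 3) ^ 3) (q2 * s / cmod (P 1 - P 4) ^ 3)
               (s * t / cmod (P 2 - P 4) ^ 3) P v) (at 0)"
proof -
  have inverse_distance: "((\<lambda>\<tau>. w / cmod (\<gamma> \<tau> i - \<gamma> \<tau> j)) has_real_derivative
      - (w / cmod (P i - P j) ^ 3 * inner (P i - P j) (v i - v j))) (at 0)"
    if "i < 5" "j < 5" "P i \<noteq> P j" for w i j
    using inverse_norm_has_real_derivative[OF has_vector_derivative_diff, of "\<lambda>\<tau>. \<gamma> \<tau> i" "v i" 0
        "\<lambda>\<tau>. \<gamma> \<tau> j" "v j" w] d \<gamma>0 that by simp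
  have "((\<lambda>\<tau>. coulomb q1 q2 t q4 s (\<gamma> \<tau>)) has_real_derivative
      - (q1 * q4 / cmod (P 0 - P 3) ^ 3 * inner (P 0 - P 3) (v 0 - v 3))
      - (q2 * q4 / cmod (P 1 - P 3) ^ 3 * inner (P 1 - P 3) (v 1 - v 3))
      - (q1 * t / cmod (P 0 - P 2) ^ 3 * inner (P 0 - P 2) (v 0 - v 2))
      - (q2 * s / cmod (P 1 - P 4) ^ 3 * inner (P 1 - P 4) (v 1 - v 4))
      - (s * t / cmod (P 2 - P 4) ^ 3 * inner (P 2 - P 4) (v 2 - v 4))) (at 0)"
    unfolding coulomb_def diff_conv_add_uminus
    using inverse_distance[of 0 3] inverse_distance[of 1 3] inverse_distance[of 0 2]
      inverse_distance[of 1 4] inverse_distance[of 2 4] diagonals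
    by (intro DERIV_add) (simp_all add: eq_commute)
  then show ?thesis by (rule DERIV_cong) (simp add: diagonal_work_def)
qed

definition edge_cross :: "(nat \<Rightarrow> complex) \<Rightarrow> nat \<Rightarrow> nat \<Rightarrow> real" where
  "edge_cross P i j = cross (P (Suc i mod 5) - P i) (P j - P i)"

lemma edge_cross_numeral:
  "edge_cross P 1 j = cross (P 2 - P 1) (P j - P 1)"
  "edge_cross P 2 j = cross (P 3 - P 2) (P j - P 2)"
  "edge_cross P 3 j = cross (P 4 - P 3) (P j - P 3)"
  "edge_cross P 4 j = cross (P 0 - P 4) (P j - P 4)"
  by (simp_all add: edge_cross_def numeral_2_eq_2)

text \<open>Up to a nonzero factor, \<open>balance_2\<close> (resp. \<open>balance_4\<close>) is the diagonal work on the
  infinitesimal motion rotating \<open>P 2\<close> about \<open>P 1\<close> (resp. \<open>P 4\<close> about \<open>P 0\<close>), after the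
  velocity of \<open>P 3\<close> has been eliminated using the two edges at \<open>P 3\<close>.\<close>
definition balance_2 :: "(nat \<Rightarrow> complex) \<Rightarrow> real \<Rightarrow> real \<Rightarrow> real \<Rightarrow> real \<Rightarrow> real" where
  "balance_2 P u02 u03 u13 u24 =
     edge_cross P 2 4 * (u02 * edge_cross P 1 0 + u24 * edge_cross P 1 4)
     - (u03 * edge_cross P 3 0 + u13 * edge_cross P 3 1) * edge_cross P 1 3"

definition balance_4 :: "(nat \<Rightarrow> complex) \<Rightarrow> real \<Rightarrow> real \<Rightarrow> real \<Rightarrow> real \<Rightarrow> real" where
  "balance_4 P u03 u13 u14 u24 =
     edge_cross P 2 4 * (u14 * edge_cross P 4 1 + u24 * edge_cross P 4 2)
     - (u03 * edge_cross P 2 0 + u13 * edge_cross P 2 1) * edge_cross P 4 3"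

lemma balance_2_of_rotation:
  assumes "infinitesimal_motion P v" "v 0 = 0" "v 1 = 0" "v 4 = 0" "v 2 = \<i> * (P 2 - P 1)"
    and "diagonal_work u02 u03 u13 u14 u24 P v = 0"
  shows "balance_2 P u02 u03 u13 u24 = 0"
proof -
  have "inner (P 3 - P 2) (v 3 - \<i> * (P 2 - P 1)) = 0" "inner (P 4 - P 3) (0 - v 3) = 0"
    "u03 * inner (P 0 - P 3) (0 - v 3) + u13 * inner (P 1 - P 3) (0 - v 3)
      + u02 * inner (P 0 - P 2) (0 - \<i> * (P 2 - P 1)) + u24 * inner (P 2 - P 4) (\<i> * (P 2 - P 1) - 0) = 0"
    using assms(1,6) unfolding infinitesimal_motion_iff diagonal_work_def assms(2-5)
    by (simp_all add: algebra_simps)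
  then show ?thesis
    unfolding balance_2_def edge_cross_numeral by (simp add: cross_def inner_complex_def algebra_simps) algebra
qed

lemma balance_4_of_rotation:
  assumes "infinitesimal_motion P v" "v 0 = 0" "v 1 = 0" "v 2 = 0" "v 4 = \<i> * (P 4 - P 0)"
    and "diagonal_work u02 u03 u13 u14 u24 P v = 0"
  shows "balance_4 P u03 u13 u14 u24 = 0"
proof -
  have "inner (P 3 - P 2) (v 3 - 0) = 0" "inner (P 4 - P 3) (\<i> * (P 4 - P 0) - v 3) = 0"
    "u03 * inner (P 0 - P 3) (0 - v 3) + u13 * inner (P 1 - P 3) (0 - v 3)
      + u14 * inner (P 1 - P 4) (0 - \<i> * (P 4 - P 0)) + u24 * inner (P 2 - P 4) (0 - \<i> * (P 4 - P 0)) = 0"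
    using assms(1,6) unfolding infinitesimal_motion_iff diagonal_work_def assms(2-5)
    by (simp_all add: algebra_simps)
  then show ?thesis
    unfolding balance_4_def edge_cross_numeral by (simp add: cross_def inner_complex_def algebra_simps) algebra
qed

lemma real_multiple_if_cross_eq_0:
  fixes e x :: complex
  assumes "cross e x = 0" "e \<noteq> 0"
  obtains \<mu> :: real where "x = of_real \<mu> * e"
proof
  have "(Re e)\<^sup>2 + (Im e)\<^sup>2 \<noteq> 0" using assms(2) by (simp add: complex_eq_iff)
  then show "x = of_real (inner e x / ((Re e)\<^sup>2 + (Im e)\<^sup>2)) * e"
    using assms(1) by (simp add: complex_eq_iff cross_def inner_complex_def field_simps power2_eq_square)
qed

lemma orthogonal_if_cross_eq_0:
  fixes e x w :: complex
  assumes "cross e x = 0" "inner e w = 0" "e \<noteq> 0"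
  shows "inner x w = 0"
proof -
  have "((Re e)\<^sup>2 + (Im e)\<^sup>2) * inner x w = 0"
    using assms(1,2) by (simp add: cross_def inner_complex_def power2_eq_square) algebra
  moreover have "(Re e)\<^sup>2 + (Im e)\<^sup>2 \<noteq> 0" using assms(3) by (simp add: complex_eq_iff)
  ultimately show ?thesis by (metis mult_eq_0_iff)
qed

text \<open>With \<open>Fi\<close> the resultant of the diagonal forces at vertex \<open>i\<close>, the two balance conditions
  allow the forces at all vertices to be absorbed, one after the other, into tensions along the
  edges; the work of an edge tension vanishes on an infinitesimal motion.\<close>
lemma diagonal_work_eq_0_if_balanced:
  assumes b2: "balance_2 P u02 u03 u13 u24 = 0" and b4: "balance_4 P u03 u13 u14 u24 = 0"
    and nondeg: "edge_cross P 2 4 \<noteq> 0" and edges: "P 1 \<noteq> P 0" "P 2 \<noteq> P 1" "P 4 \<noteq> P 0"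
    and m: "infinitesimal_motion P v"
  shows "diagonal_work u02 u03 u13 u14 u24 P v = 0"
proof -
  define K where "K = cross (P 3 - P 2) (P 3 - P 4)"
  define F0 where "F0 = of_real u02 * (P 0 - P 2) + of_real u03 * (P 0 - P 3)"
  define F2 where "F2 = of_real u02 * (P 2 - P 0) + of_real u24 * (P 2 - P 4)"
  define F3 where "F3 = of_real u03 * (P 3 - P 0) + of_real u13 * (P 3 - P 1)"
  define F4 where "F4 = of_real u14 * (P 4 - P 1) + of_real u24 * (P 4 - P 2)"
  define c2 where "c2 = cross F3 (P 3 - P 4)"
  define c4 where "c4 = cross (P 3 - P 2) F3"
  have "cross (P 2 - P 1) (of_real K * F2 + of_real c2 * (P 3 - P 2)) = 0"
    using b2 unfolding balance_2_def edge_cross_numeral K_def c2_def F2_def F3_def by (simp add: cross_def algebra_simps)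
  then obtain m2 where m2: "of_real K * F2 + of_real c2 * (P 3 - P 2) = of_real m2 * (P 2 - P 1)"
    using real_multiple_if_cross_eq_0 edges(2) by (metis right_minus_eq)
  have "cross (P 4 - P 0) (of_real K * F4 + of_real c4 * (P 3 - P 4)) = 0"
    using b4 unfolding balance_4_def edge_cross_numeral K_def c4_def F4_def F3_def by (simp add: cross_def algebra_simps)
  then obtain m4 where m4: "of_real K * F4 + of_real c4 * (P 3 - P 4) = of_real m4 * (P 4 - P 0)"
    using real_multiple_if_cross_eq_0 edges(3) by (metis right_minus_eq)
  have "cross (P 1 - P 0) (of_real K * F0 + of_real m4 * (P 4 - P 0)) = 0"
    using m2 m4 unfolding K_def c2_def c4_def F0_def F2_def F3_def F4_def
    by (simp add: cross_def complex_eq_iff algebra_simps) algebra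
  moreover have e: "inner (P 1 - P 0) (v 1 - v 0) = 0" "inner (P 2 - P 1) (v 2 - v 1) = 0"
    "inner (P 3 - P 2) (v 3 - v 2) = 0" "inner (P 4 - P 3) (v 4 - v 3) = 0"
    "inner (P 0 - P 4) (v 0 - v 4) = 0"
    using m by (simp_all add: infinitesimal_motion_iff)
  ultimately have "inner (of_real K * F0 + of_real m4 * (P 4 - P 0)) (v 1 - v 0) = 0"
    using orthogonal_if_cross_eq_0 edges(1) by (metis right_minus_eq)
  then have "K * diagonal_work u02 u03 u13 u14 u24 P v = 0"
    using m2 m4 e unfolding K_def c2_def c4_def F0_def F2_def F3_def F4_def diagonal_work_def
    by (simp add: cross_def inner_complex_def complex_eq_iff algebra_simps) algebra
  moreover have "K \<noteq> 0"
    using nondeg unfolding K_def edge_cross_numeral by (simp add: cross_def algebra_simps)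
  ultimately show ?thesis by simp
qed

lemma balanced_if_critical_on_config:
  assumes f: "\<And>\<gamma> v. \<forall>i<5. \<gamma> 0 i = P i \<Longrightarrow> \<forall>i<5. ((\<lambda>\<tau>. \<gamma> \<tau> i) has_vector_derivative v i) (at 0) \<Longrightarrow>
      ((\<lambda>\<tau>. f (\<gamma> \<tau>)) has_real_derivative - diagonal_work u02 u03 u13 u14 u24 P v) (at 0)"
    and cfg: "in_config a P" and pos: "\<forall>i<5. a i > 0" and nondeg: "edge_cross P 2 4 \<noteq> 0"
    and crit: "critical_on_config a f P"
  shows "balance_2 P u02 u03 u13 u24 = 0" and "balance_4 P u03 u13 u14 u24 = 0"
proof -
  have along_curve: "diagonal_work u02 u03 u13 u14 u24 P v = 0 \<and> infinitesimal_motion P v"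
    if \<gamma>0: "\<forall>i<5. \<gamma> 0 i = P i" and d: "\<forall>i<5. ((\<lambda>\<tau>. \<gamma> \<tau> i) has_vector_derivative v i) (at 0)"
      and ev: "\<forall>\<^sub>F \<tau> in nhds 0. in_config a (\<gamma> \<tau>)" for \<gamma> v
  proof
    have "((\<lambda>\<tau>. f (\<gamma> \<tau>)) has_real_derivative 0) (at 0)"
      using crit that unfolding critical_on_config_def by blast
    then show "diagonal_work u02 u03 u13 u14 u24 P v = 0"
      using DERIV_unique f[OF \<gamma>0 d] by fastforce
    show "infinitesimal_motion P v" by (rule tangent_is_infinitesimal_motion[OF \<gamma>0 d ev pos])
  qed
  have "cross (P 2 - P 4) (P 3 - P 4) \<noteq> 0"
    using nondeg by (simp add: edge_cross_numeral cross_def algebra_simps)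
  then obtain \<gamma> v where curve: "\<forall>i<5. \<gamma> 0 i = P i" "\<forall>i<5. ((\<lambda>\<tau>. \<gamma> \<tau> i) has_vector_derivative v i) (at 0)"
    "\<forall>\<^sub>F \<tau> in nhds 0. in_config a (\<gamma> \<tau>)" and v: "v 2 = \<i> * (P 2 - P 1)" "\<forall>i. i \<noteq> 2 \<and> i \<noteq> 3 \<longrightarrow> v i = 0"
    using rotation_curve[OF cfg, of 2 1 4] by auto
  then show "balance_2 P u02 u03 u13 u24 = 0"
    using along_curve[OF curve] v by (intro balance_2_of_rotation[of P v]) auto
  have "cross (P 4 - P 2) (P 3 - P 2) \<noteq> 0"
    using nondeg by (simp add: edge_cross_numeral cross_def algebra_simps)
  then obtain \<gamma> v where curve: "\<forall>i<5. \<gamma> 0 i = P i" "\<forall>i<5. ((\<lambda>\<tau>. \<gamma> \<tau> i) has_vector_derivative v i) (at 0)"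
    "\<forall>\<^sub>F \<tau> in nhds 0. in_config a (\<gamma> \<tau>)" and v: "v 4 = \<i> * (P 4 - P 0)" "\<forall>i. i \<noteq> 4 \<and> i \<noteq> 3 \<longrightarrow> v i = 0"
    using rotation_curve[OF cfg, of 4 0 2] by auto
  then show "balance_4 P u03 u13 u14 u24 = 0"
    using along_curve[OF curve] v by (intro balance_4_of_rotation[of P v]) auto
qed

lemma critical_on_config_if_balanced:
  assumes f: "\<And>\<gamma> v. \<forall>i<5. \<gamma> 0 i = P i \<Longrightarrow> \<forall>i<5. ((\<lambda>\<tau>. \<gamma> \<tau> i) has_vector_derivative v i) (at 0) \<Longrightarrow>
      ((\<lambda>\<tau>. f (\<gamma> \<tau>)) has_real_derivative - diagonal_work u02 u03 u13 u14 u24 P v) (at 0)"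
    and cfg: "in_config a P" and pos: "\<forall>i<5. a i > 0" and nondeg: "edge_cross P 2 4 \<noteq> 0"
    and balanced: "balance_2 P u02 u03 u13 u24 = 0" "balance_4 P u03 u13 u14 u24 = 0"
  shows "critical_on_config a f P"
  unfolding critical_on_config_def
proof (intro allI impI, elim conjE)
  fix \<gamma> :: "real \<Rightarrow> nat \<Rightarrow> complex" and v :: "nat \<Rightarrow> complex"
  assume \<gamma>0: "\<forall>i<5. \<gamma> 0 i = P i" and d: "\<forall>i<5. ((\<lambda>\<tau>. \<gamma> \<tau> i) has_vector_derivative v i) (at 0)"
    and ev: "\<forall>\<^sub>F \<tau> in nhds 0. in_config a (\<gamma> \<tau>)"
  have edges: "P 1 \<noteq> P 0" "P 2 \<noteq> P 1" "P 4 \<noteq> P 0"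
    using cfg pos[rule_format, of 0] pos[rule_format, of 1] pos[rule_format, of 4]
    by (auto simp: in_config_iff)
  have "infinitesimal_motion P v" by (rule tangent_is_infinitesimal_motion[OF \<gamma>0 d ev pos])
  then have "diagonal_work u02 u03 u13 u14 u24 P v = 0"
    by (rule diagonal_work_eq_0_if_balanced[OF balanced nondeg edges])
  then show "((\<lambda>\<tau>. f (\<gamma> \<tau>)) has_real_derivative 0) (at 0)"
    using f[OF \<gamma>0 d] by simp
qed

lemma critical_on_config_iff_balanced:
  assumes "\<And>\<gamma> v. \<forall>i<5. \<gamma> 0 i = P i \<Longrightarrow> \<forall>i<5. ((\<lambda>\<tau>. \<gamma> \<tau> i) has_vector_derivative v i) (at 0) \<Longrightarrow>
      ((\<lambda>\<tau>. f (\<gamma> \<tau>)) has_real_derivative - diagonal_work u02 u03 u13 u14 u24 P v) (at 0)"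
    and "in_config a P" "\<forall>i<5. a i > 0" "edge_cross P 2 4 \<noteq> 0"
  shows "critical_on_config a f P \<longleftrightarrow>
           balance_2 P u02 u03 u13 u24 = 0 \<and> balance_4 P u03 u13 u14 u24 = 0"
proof
  assume "critical_on_config a f P"
  then show "balance_2 P u02 u03 u13 u24 = 0 \<and> balance_4 P u03 u13 u14 u24 = 0"
    by (intro conjI balanced_if_critical_on_config[OF assms])
next
  assume "balance_2 P u02 u03 u13 u24 = 0 \<and> balance_4 P u03 u13 u14 u24 = 0"
  then show "critical_on_config a f P"
    by (elim conjE) (rule critical_on_config_if_balanced[OF assms])
qed

section \<open>Convex configurations\<close>

lemma strictly_convex_edge_cross_mult_pos:
  assumes "strictly_convex P" "i < 5" "j < 5" "j \<noteq> i" "j \<noteq> Suc i mod 5"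
    "k < 5" "l < 5" "l \<noteq> k" "l \<noteq> Suc k mod 5"
  shows "edge_cross P i j * edge_cross P k l > 0"
  using assms(1) unfolding strictly_convex_def
proof (elim disjE)
  assume "\<forall>i<5. \<forall>j<5. j \<noteq> i \<and> j \<noteq> Suc i mod 5 \<longrightarrow> 0 < cross (P (Suc i mod 5) - P i) (P j - P i)"
  then show ?thesis using assms(2-) by (intro mult_pos_pos) (auto simp: edge_cross_def)
next
  assume "\<forall>i<5. \<forall>j<5. j \<noteq> i \<and> j \<noteq> Suc i mod 5 \<longrightarrow> cross (P (Suc i mod 5) - P i) (P j - P i) < 0"
  then show ?thesis using assms(2-) by (intro mult_neg_neg) (auto simp: edge_cross_def)
qed

lemma strictly_convex_nondegenerate:
  assumes "strictly_convex P"
  shows "P 0 \<noteq> P 2" "P 0 \<noteq> P 3" "P 1 \<noteq> P 3" "P 1 \<noteq> P 4" "P 2 \<noteq> P 4" "edge_cross P 2 4 \<noteq> 0"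
proof -
  have nz: "edge_cross P i j \<noteq> 0" if "i < 5" "j < 5" "j \<noteq> i" "j \<noteq> Suc i mod 5" for i j
    using strictly_convex_edge_cross_mult_pos[OF assms that that] by auto
  show "P 0 \<noteq> P 2" using nz[of 1 0] unfolding edge_cross_numeral by (auto simp: cross_def algebra_simps)
  show "P 0 \<noteq> P 3" using nz[of 3 0] unfolding edge_cross_numeral by (auto simp: cross_def algebra_simps)
  show "P 1 \<noteq> P 3" using nz[of 3 1] unfolding edge_cross_numeral by (auto simp: cross_def algebra_simps)
  show "P 1 \<noteq> P 4" using nz[of 4 1] unfolding edge_cross_numeral by (auto simp: cross_def algebra_simps)
  show "P 2 \<noteq> P 4" using nz[of 2 4] unfolding edge_cross_numeral by (auto simp: cross_def algebra_simps)
  show "edge_cross P 2 4 \<noteq> 0" using nz[of 2 4] by simp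
qed

lemma strictly_convex_balance_coefficients:
  fixes q1 q2 q4 :: real
  assumes sc: "strictly_convex P" and "q1 > 0" "q2 > 0" "q4 > 0"
  obtains A1 B1 G1 A2 B2 G2 :: real
  where "A1 > 0" "B1 > 0" "G1 > 0" "A2 > 0" "B2 > 0" "G2 > 0"
    and "\<And>s t. balance_2 P (q1 * t / cmod (P 0 - P 2) ^ 3) (q1 * q4 / cmod (P 0 - P 3) ^ 3)
           (q2 * q4 / cmod (P 1 - P 3) ^ 3) (s * t / cmod (P 2 - P 4) ^ 3) = t * (A1 + s * B1) - G1"
    and "\<And>s t. balance_4 P (q1 * q4 / cmod (P 0 - P 3) ^ 3) (q2 * q4 / cmod (P 1 - P 3) ^ 3)
           (q2 * s / cmod (P 1 - P 4) ^ 3) (s * t / cmod (P 2 - P 4) ^ 3) = s * (A2 + t * B2) - G2"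
proof -
  note p = strictly_convex_edge_cross_mult_pos[OF sc]
  have d: "cmod (P 0 - P 2) > 0" "cmod (P 0 - P 3) > 0" "cmod (P 1 - P 3) > 0"
    "cmod (P 1 - P 4) > 0" "cmod (P 2 - P 4) > 0"
    using strictly_convex_nondegenerate[OF sc] by auto
  define u03 where "u03 = q1 * q4 / cmod (P 0 - P 3) ^ 3"
  define u13 where "u13 = q2 * q4 / cmod (P 1 - P 3) ^ 3"
  have u: "u03 > 0" "u13 > 0" using d assms(2-4) by (simp_all add: u03_def u13_def)
  show ?thesis
  proof (rule that)
    show "q1 * (edge_cross P 2 4 * edge_cross P 1 0) / cmod (P 0 - P 2) ^ 3 > 0"
      using p[of 2 4 1 0] d assms(2) by simp
    show "edge_cross P 2 4 * edge_cross P 1 4 / cmod (P 2 - P 4) ^ 3 > 0"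
      using p[of 2 4 1 4] d by simp
    show "u03 * (edge_cross P 3 0 * edge_cross P 1 3) + u13 * (edge_cross P 3 1 * edge_cross P 1 3) > 0"
      using p[of 3 0 1 3] p[of 3 1 1 3] u by (simp add: add_pos_pos)
    show "q2 * (edge_cross P 2 4 * edge_cross P 4 1) / cmod (P 1 - P 4) ^ 3 > 0"
      using p[of 2 4 4 1] d assms(3) by simp
    show "edge_cross P 2 4 * edge_cross P 4 2 / cmod (P 2 - P 4) ^ 3 > 0"
      using p[of 2 4 4 2] d by simp
    show "u03 * (edge_cross P 2 0 * edge_cross P 4 3) + u13 * (edge_cross P 2 1 * edge_cross P 4 3) > 0"
      using p[of 2 0 4 3] p[of 2 1 4 3] u by (simp add: add_pos_pos)
  qed (simp_all add: balance_2_def balance_4_def u03_def u13_def algebra_simps)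
qed

section \<open>Positive solutions of the bilinear system\<close>

lemma quadratic_unique_positive_root:
  fixes a b c :: real
  assumes "a > 0" "c > 0"
  shows "\<exists>!t. t > 0 \<and> a * t\<^sup>2 + b * t - c = 0"
proof (rule ex_ex1I)
  define D where "D = b\<^sup>2 + 4 * a * c"
  define t where "t = (- b + sqrt D) / (2 * a)"
  have "\<bar>b\<bar> < sqrt D"
    using assms by (simp add: D_def real_less_rsqrt)
  then have "t > 0" using assms by (simp add: t_def)
  moreover have "(sqrt D)\<^sup>2 = D"
    using assms by (simp add: D_def)
  then have "a * t\<^sup>2 + b * t - c = 0"
    using assms by (simp add: t_def D_def field_simps power2_eq_square)
  ultimately show "\<exists>t. t > 0 \<and> a * t\<^sup>2 + b * t - c = 0" by blast
next
  fix t t' :: real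
  assume t: "t > 0 \<and> a * t\<^sup>2 + b * t - c = 0" and t': "t' > 0 \<and> a * t'\<^sup>2 + b * t' - c = 0"
  have "(t - t') * (a * (t + t') + b) = 0"
    using t t' by (simp add: algebra_simps power2_eq_square)
  moreover have "a * (t + t') + b \<noteq> 0"
  proof
    assume "a * (t + t') + b = 0"
    then have b: "b = - a * (t + t')" by simp
    have "c = a * t * t + b * t" using t by (simp add: power2_eq_square)
    also have "\<dots> = - a * t * t'" by (simp add: b algebra_simps)
    finally have "c = - a * t * t'" .
    moreover have "a * t * t' > 0" using assms t t' by simp
    ultimately show False using assms(2) by linarith
  qed
  ultimately show "t = t'" by simp
qed

lemma bilinear_system_unique_positive_solution:
  fixes A1 B1 G1 A2 B2 G2 :: real
  assumes "A1 > 0" "B1 > 0" "G1 > 0" "A2 > 0" "B2 > 0" "G2 > 0"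
  shows "\<exists>!st :: real \<times> real. fst st > 0 \<and> snd st > 0 \<and>
           snd st * (A1 + fst st * B1) = G1 \<and> fst st * (A2 + snd st * B2) = G2"
proof -
  define quad where "quad t \<longleftrightarrow> t > 0 \<and> A1 * B2 * t\<^sup>2 + (A1 * A2 + B1 * G2 - G1 * B2) * t - G1 * A2 = 0"
    for t :: real
  have solution_iff: "s > 0 \<and> t > 0 \<and> t * (A1 + s * B1) = G1 \<and> s * (A2 + t * B2) = G2 \<longleftrightarrow>
      quad t \<and> s = G2 / (A2 + t * B2)" for s t
  proof (cases "t > 0")
    case True
    define d where "d = A2 + t * B2"
    have d: "d > 0" using True assms by (simp add: d_def add_pos_pos)
    have "t * (A1 + G2 / d * B1) = G1 \<longleftrightarrow> t * (A1 * d + G2 * B1) = G1 * d"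
      using d by (simp add: field_simps)
    also have "\<dots> \<longleftrightarrow> A1 * B2 * t\<^sup>2 + (A1 * A2 + B1 * G2 - G1 * B2) * t - G1 * A2 = 0"
      by (simp add: d_def algebra_simps power2_eq_square)
    finally have "t * (A1 + G2 / d * B1) = G1 \<longleftrightarrow> quad t" using True by (simp add: quad_def)
    moreover have "s * d = G2 \<longleftrightarrow> s = G2 / d" using d by (simp add: eq_divide_eq)
    ultimately show ?thesis using d assms(6) True by (auto simp: d_def[symmetric] zero_less_mult_iff)
  qed (simp add: quad_def)
  obtain t0 where t0: "quad t0" and unique: "\<And>t. quad t \<Longrightarrow> t = t0"
    using quadratic_unique_positive_root[of "A1 * B2" "G1 * A2" "A1 * A2 + B1 * G2 - G1 * B2"] assms
    unfolding quad_def by auto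
  show ?thesis
  proof (rule ex1I[of _ "(G2 / (A2 + t0 * B2), t0)"])
    show "fst (G2 / (A2 + t0 * B2), t0) > 0 \<and> snd (G2 / (A2 + t0 * B2), t0) > 0 \<and>
        snd (G2 / (A2 + t0 * B2), t0) * (A1 + fst (G2 / (A2 + t0 * B2), t0) * B1) = G1 \<and>
        fst (G2 / (A2 + t0 * B2), t0) * (A2 + snd (G2 / (A2 + t0 * B2), t0) * B2) = G2"
      unfolding fst_conv snd_conv solution_iff using t0 by simp
  next
    fix st :: "real \<times> real"
    assume "fst st > 0 \<and> snd st > 0 \<and> snd st * (A1 + fst st * B1) = G1 \<and> fst st * (A2 + snd st * B2) = G2"
    then show "st = (G2 / (A2 + t0 * B2), t0)"
      using solution_iff[of "fst st" "snd st"] unique by (cases st) auto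
  qed
qed

theorem theorem3:
  fixes a :: "nat \<Rightarrow> real" and q1 q2 q4 :: real and P :: "nat \<Rightarrow> complex"
  assumes "\<forall>i<5. a i > 0"
    and "q1 > 0" and "q2 > 0" and "q4 > 0"
    and "in_config a P" and "strictly_convex P"
  shows "\<exists>!st :: real \<times> real. fst st > 0 \<and> snd st > 0 \<and>
           critical_on_config a (coulomb q1 q2 (snd st) q4 (fst st)) P"
proof -
  note nondeg = strictly_convex_nondegenerate[OF assms(6)]
  obtain A1 B1 G1 A2 B2 G2 :: real
    where coeffs: "A1 > 0" "B1 > 0" "G1 > 0" "A2 > 0" "B2 > 0" "G2 > 0"
      and b2: "\<And>s t. balance_2 P (q1 * t / cmod (P 0 - P 2) ^ 3) (q1 * q4 / cmod (P 0 - P 3) ^ 3)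
           (q2 * q4 / cmod (P 1 - P 3) ^ 3) (s * t / cmod (P 2 - P 4) ^ 3) = t * (A1 + s * B1) - G1"
      and b4: "\<And>s t. balance_4 P (q1 * q4 / cmod (P 0 - P 3) ^ 3) (q2 * q4 / cmod (P 1 - P 3) ^ 3)
           (q2 * s / cmod (P 1 - P 4) ^ 3) (s * t / cmod (P 2 - P 4) ^ 3) = s * (A2 + t * B2) - G2"
    using strictly_convex_balance_coefficients[OF assms(6,2,3,4)] by blast
  have "critical_on_config a (coulomb q1 q2 t q4 s) P \<longleftrightarrow>
      t * (A1 + s * B1) = G1 \<and> s * (A2 + t * B2) = G2" for s t
    by (subst critical_on_config_iff_balanced[OF _ assms(5,1) nondeg(6)],
        erule (1) coulomb_has_real_derivative[OF nondeg(1-5)]) (simp only: b2 b4, simp)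
  then show ?thesis
    using bilinear_system_unique_positive_solution[OF coeffs] by simp
qed

end
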